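(* Let $0\le m\le n$, $x=(x_1,\dots,x_m)$, $y=(y_1,\dots,y_n)$. Then \[\omega(x,y;t)=t^{m(m-n)}(1-t)^m\sum_{\substack{l_1,\dots,l_m=1\\ l_i\ne l_j\ (i\ne j)}}^n\prod_{i=1}^m\frac{y_{l_i}}{x_i-ty_{l_i}}\prod_{\substack{i=1\\ i\ne l_1,\dots,l_m}}^n\prod_{j=1}^m\frac{y_i-ty_{l_j}}{y_i-y_{l_j}}\prod_{1\le i<j\le m}\frac{x_i-y_{l_j}}{x_i-ty_{l_j}}\cdot\frac{y_{l_i}-ty_{l_j}}{y_{l_i}-y_{l_j}}.\]
   Context: For $x=(x_1,\dots,x_m)$ and $y=(y_1,\dots,y_n)$, \[\omega(x,y;t)=\sum_{I\subseteq\{1,\dots,m\}}(-1)^{|I|}t^{\binom{|I|}{2}}\prod_{i\in I,\ j\in\{1,\dots,m\}\setminus I}\frac{x_i-tx_j}{x_i-x_j}\prod_{i\in I}\prod_{j=1}^n\frac{x_i-y_j}{x_i-ty_j}\] (a rational function; $\omega=1$ when $m=0$). *)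

theory Defs
  imports Main "HOL-Library.FuncSet"
begin

definition omega :: "nat \<Rightarrow> nat \<Rightarrow> (nat \<Rightarrow> 'a::field) \<Rightarrow> (nat \<Rightarrow> 'a) \<Rightarrow> 'a \<Rightarrow> 'a" where
  "omega m n x y t =
    (\<Sum>I\<in>Pow {1..m}. (-1) ^ card I * t ^ (card I choose 2)
       * (\<Prod>i\<in>I. \<Prod>j\<in>{1..m} - I. (x i - t * x j) / (x i - x j))
       * (\<Prod>i\<in>I. \<Prod>j\<in>{1..n}. (x i - y j) / (x i - t * y j)))"

end

theory Submission
  imports Defs
begin

(* omega m n x y t = omega_on {1..m} F, where omega_on A F sums over I <= A the terms
     (-1)^|I| t^(|I| choose 2) prod_{i in I, j in A-I} (x_i - t x_j)/(x_i - x_j) prod_{i in I} F(x_i)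
   and F(z) = prod_k (z - y_k)/(z - t y_k).  As a rational function of z = x_a, omega_on (A + {a}) F
   has no poles at the x_j (the contributions of I and I + {j} cancel) and vanishes at infinity, so
   by partial fractions it is the sum of its principal parts at the poles t y_k of F.  The residue at
   t y_k is a multiple of omega_on A F', where F' drops the factor of y_k from F; iterating over
   x_m, ..., x_1 produces the sum over injections l : {1..m} -> {1..n}. *)

section \<open>Partial fractions\<close>

lemma inj_on_case_sum:
  assumes "inj_on f A" "inj_on g B" "\<forall>a\<in>A. \<forall>b\<in>B. f a \<noteq> g b"
  shows "inj_on (case_sum f g) (A <+> B)"
  using assms by (auto simp: inj_on_def split: sum.split) metis

lemma diff_divide_diff_swap: "((a::'a::field) - b) / (c - d) = (b - a) / (d - c)"
  by (metis minus_diff_eq minus_divide_divide)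

lemma divide_two_linear_partial_fractions:
  fixes r z p q :: "'a::field"
  assumes "p \<noteq> q" "z \<noteq> p" "z \<noteq> q"
  shows "r / (z - p) / (z - q) = r / (p - q) / (z - p) + r / (q - p) / (z - q)"
proof -
  have nz: "z - p \<noteq> 0" "z - q \<noteq> 0" "p - q \<noteq> 0" "q - p \<noteq> 0" using assms by auto
  have "r / (p - q) / (z - p) + r / (q - p) / (z - q) = r * ((z - q) - (z - p)) / ((p - q) * (z - p) * (z - q))"
    using nz by (simp add: divide_simps) (simp add: algebra_simps)
  also have "\<dots> = r / (z - p) / (z - q)" using nz by (simp add: divide_simps)
  finally show ?thesis ..
qed

lemma sum_divide_linear_partial_fractions:
  fixes R b :: "'b \<Rightarrow> 'a::field"
  assumes "z \<notin> b ` N" "c \<notin> b ` N" "z \<noteq> c"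
  shows "(\<Sum>k\<in>N. R k / (z - b k)) / (z - c) =
    (\<Sum>k\<in>N. R k / (b k - c) / (z - b k)) + (\<Sum>k\<in>N. R k / (c - b k)) / (z - c)"
proof -
  have "(\<Sum>k\<in>N. R k / (z - b k)) / (z - c) = (\<Sum>k\<in>N. R k / (z - b k) / (z - c))"
    by (simp add: sum_divide_distrib)
  also have "\<dots> = (\<Sum>k\<in>N. R k / (b k - c) / (z - b k) + R k / (c - b k) / (z - c))"
    using assms by (intro sum.cong refl divide_two_linear_partial_fractions) auto
  finally show ?thesis by (simp add: sum.distrib sum_divide_distrib)
qed

lemma partial_fraction_residue_insert:
  fixes \<alpha> a b :: "'b \<Rightarrow> 'a::field"
  assumes "finite N" "c \<notin> N" "k \<in> N" "b k \<noteq> b c"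
  shows "(\<Prod>j\<in>insert c N. \<alpha> j * b k - a j) / (\<Prod>j\<in>insert c N - {k}. b k - b j) =
    (\<alpha> c + (\<alpha> c * b c - a c) / (b k - b c)) * ((\<Prod>j\<in>N. \<alpha> j * b k - a j) / (\<Prod>j\<in>N - {k}. b k - b j))"
proof -
  have "insert c N - {k} = insert c (N - {k})" using assms by auto
  then show ?thesis using assms by (simp add: field_simps)
qed

lemma prod_partial_fractions:
  fixes \<alpha> a b :: "'b \<Rightarrow> 'a::field"
  assumes "finite N" "inj_on b N" "z \<notin> b ` N"
  shows "(\<Prod>k\<in>N. (\<alpha> k * z - a k) / (z - b k)) =
    (\<Prod>k\<in>N. \<alpha> k) + (\<Sum>k\<in>N. (\<Prod>j\<in>N. \<alpha> j * b k - a j) / (\<Prod>j\<in>N-{k}. b k - b j) / (z - b k))"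
  using assms
proof (induction N arbitrary: z rule: finite_induct)
  case empty
  then show ?case by simp
next
  case (insert c N)
  define R where "R k = (\<Prod>j\<in>N. \<alpha> j * b k - a j) / (\<Prod>j\<in>N-{k}. b k - b j)" for k
  define D where "D = \<alpha> c * b c - a c"
  define P where "P = (\<Prod>k\<in>N. \<alpha> k)"
  define S where "S = (\<Sum>k\<in>N. R k / (z - b k))"
  define T where "T = (\<Sum>k\<in>N. R k / (b c - b k))"
  have inj: "inj_on b N" and bc: "b c \<notin> b ` N" and zc: "z \<noteq> b c" and zN: "z \<notin> b ` N"
    using insert by auto
  have IH_z: "(\<Prod>k\<in>N. (\<alpha> k * z - a k) / (z - b k)) = P + S"
    unfolding P_def S_def R_def by (rule insert.IH[OF inj zN])
  have IH_c: "P + T = (\<Prod>j\<in>N. (\<alpha> j * b c - a j) / (b c - b j))"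
    unfolding P_def T_def R_def by (rule insert.IH[OF inj bc, symmetric])
  \<comment> \<open>the induction hypothesis evaluated at the new pole b c gives the residue there\<close>
  have residue_c: "D * (P + T) =
      (\<Prod>j\<in>insert c N. \<alpha> j * b c - a j) / (\<Prod>j\<in>insert c N - {c}. b c - b j)"
    using insert.hyps unfolding IH_c D_def by (simp add: prod_dividef)
  have residue_k: "(\<alpha> c + D / (b k - b c)) * R k =
      (\<Prod>j\<in>insert c N. \<alpha> j * b k - a j) / (\<Prod>j\<in>insert c N - {k}. b k - b j)" if k: "k \<in> N" for k
  proof -
    have "b k \<noteq> b c" using k bc by (metis image_eqI)
    then show ?thesis
      unfolding R_def D_def by (rule partial_fraction_residue_insert[OF insert.hyps k, symmetric])
  qed
  have sum_k: "\<alpha> c * S + D * (\<Sum>k\<in>N. R k / (b k - b c) / (z - b k)) =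
      (\<Sum>k\<in>N. (\<alpha> c + D / (b k - b c)) * R k / (z - b k))"
    unfolding S_def sum_distrib_left sum.distrib[symmetric]
    by (rule sum.cong) (simp_all add: divide_inverse algebra_simps)
  have "(\<Prod>k\<in>insert c N. (\<alpha> k * z - a k) / (z - b k)) = (\<alpha> c + D / (z - b c)) * (P + S)"
  proof -
    have "(\<alpha> c * z - a c) / (z - b c) = \<alpha> c + D / (z - b c)"
      using zc by (simp add: D_def field_simps)
    then show ?thesis using insert.hyps by (simp add: IH_z)
  qed
  also have "\<dots> = \<alpha> c * P + (\<alpha> c * S + D * (S / (z - b c))) + D * P / (z - b c)"
    by (simp add: algebra_simps add_divide_distrib)
  also have "\<dots> = \<alpha> c * P + (\<Sum>k\<in>N. (\<alpha> c + D / (b k - b c)) * R k / (z - b k)) + D * (P + T) / (z - b c)"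
    unfolding S_def sum_divide_linear_partial_fractions[OF zN bc zc] sum_k[unfolded S_def, symmetric] T_def
    by (simp add: algebra_simps add_divide_distrib)
  also have "\<dots> = (\<Prod>k\<in>insert c N. \<alpha> k) + (\<Sum>k\<in>insert c N.
      (\<Prod>j\<in>insert c N. \<alpha> j * b k - a j) / (\<Prod>j\<in>insert c N - {k}. b k - b j) / (z - b k))"
  proof -
    have "(\<Sum>k\<in>N. (\<alpha> c + D / (b k - b c)) * R k / (z - b k)) =
        (\<Sum>k\<in>N. (\<Prod>j\<in>insert c N. \<alpha> j * b k - a j) / (\<Prod>j\<in>insert c N - {k}. b k - b j) / (z - b k))"
      by (rule sum.cong) (simp_all add: residue_k)
    then show ?thesis
      unfolding residue_c using insert.hyps by (simp add: P_def algebra_simps)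
  qed
  finally show ?case .
qed

section \<open>The recursion in the number of x-variables\<close>

definition cross_factor :: "'a::field \<Rightarrow> ('i \<Rightarrow> 'a) \<Rightarrow> 'i set \<Rightarrow> 'i set \<Rightarrow> 'a" where
  "cross_factor t x A I = (\<Prod>i\<in>I. \<Prod>j\<in>A - I. (x i - t * x j) / (x i - x j))"

definition omega_coeff :: "'a::field \<Rightarrow> ('i \<Rightarrow> 'a) \<Rightarrow> 'i set \<Rightarrow> 'i set \<Rightarrow> 'a" where
  "omega_coeff t x A I = (-1) ^ card I * t ^ (card I choose 2) * cross_factor t x A I"

definition omega_on :: "'a::field \<Rightarrow> ('i \<Rightarrow> 'a) \<Rightarrow> 'i set \<Rightarrow> ('a \<Rightarrow> 'a) \<Rightarrow> 'a" where
  "omega_on t x A F = (\<Sum>I\<in>Pow A. omega_coeff t x A I * (\<Prod>i\<in>I. F (x i)))"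

definition omega_weight :: "'a::field \<Rightarrow> ('j \<Rightarrow> 'a) \<Rightarrow> 'j set \<Rightarrow> 'a \<Rightarrow> 'a" where
  "omega_weight t y B z = (\<Prod>k\<in>B. (z - y k) / (z - t * y k))"

lemma omega_eq_omega_on: "omega m n x y t = omega_on t x {1..m} (omega_weight t y {1..n})"
  unfolding omega_def omega_on_def omega_coeff_def cross_factor_def omega_weight_def ..

lemma Suc_choose_two: "(Suc k choose 2) = (k choose 2) + k"
  using binomial_Suc_Suc[of k 1] by (simp add: numeral_2_eq_2)

lemma prod_prod_insert_inner:
  "finite B \<Longrightarrow> a \<notin> B \<Longrightarrow> (\<Prod>i\<in>J. \<Prod>j\<in>insert a B. h i j) = (\<Prod>i\<in>J. h i a) * (\<Prod>i\<in>J. \<Prod>j\<in>B. h i j)"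
  by (simp add: prod.distrib)

lemma omega_on_insert:
  fixes t :: "'a::field"
  assumes A: "finite A" and a: "a \<notin> A"
  shows "omega_on t x (insert a A) F = (\<Sum>J\<in>Pow A. omega_coeff t x A J * (\<Prod>i\<in>J. F (x i)) *
      ((\<Prod>i\<in>J. (x i - t * x a) / (x i - x a)) - t ^ card J * F (x a) * (\<Prod>j\<in>A - J. (x a - t * x j) / (x a - x j))))"
proof -
  define g where "g I = omega_coeff t x (insert a A) I * (\<Prod>i\<in>I. F (x i))" for I
  have inj: "inj_on (insert a) (Pow A)" using a by (auto simp: inj_on_def)
  have disj: "Pow A \<inter> insert a ` Pow A = {}" using a by auto
  have "omega_on t x (insert a A) F = sum g (Pow A) + sum (g \<circ> insert a) (Pow A)"
    unfolding omega_on_def g_def[abs_def] Pow_insert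
    using A by (subst sum.union_disjoint) (auto simp: disj sum.reindex[OF inj])
  also have "\<dots> = (\<Sum>J\<in>Pow A. g J + g (insert a J))" by (simp add: sum.distrib)
  also have "\<dots> = (\<Sum>J\<in>Pow A. omega_coeff t x A J * (\<Prod>i\<in>J. F (x i)) *
      ((\<Prod>i\<in>J. (x i - t * x a) / (x i - x a)) - t ^ card J * F (x a) * (\<Prod>j\<in>A - J. (x a - t * x j) / (x a - x j))))"
  proof (rule sum.cong[OF refl])
    fix J assume J: "J \<in> Pow A"
    then have fJ: "finite J" using A finite_subset by auto
    have aJ: "a \<notin> J" using J a by auto
    have drop_a: "insert a A - J = insert a (A - J)" using aJ by auto
    have without_a: "g J = omega_coeff t x A J * (\<Prod>i\<in>J. F (x i)) * (\<Prod>i\<in>J. (x i - t * x a) / (x i - x a))"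
      unfolding g_def omega_coeff_def cross_factor_def drop_a by (subst prod_prod_insert_inner) (auto simp: A a mult_ac)
    have drop_both: "insert a A - insert a J = A - J" using a by auto
    have with_a: "g (insert a J) = - (omega_coeff t x A J * (\<Prod>i\<in>J. F (x i)) *
        (t ^ card J * F (x a) * (\<Prod>j\<in>A - J. (x a - t * x j) / (x a - x j))))"
      unfolding g_def omega_coeff_def cross_factor_def drop_both using fJ aJ by (simp add: Suc_choose_two power_add)
    show "g J + g (insert a J) = omega_coeff t x A J * (\<Prod>i\<in>J. F (x i)) *
      ((\<Prod>i\<in>J. (x i - t * x a) / (x i - x a)) - t ^ card J * F (x a) * (\<Prod>j\<in>A - J. (x a - t * x j) / (x a - x j)))"
      unfolding without_a with_a by (simp add: algebra_simps)
  qed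
  finally show ?thesis .
qed

lemma sum_Pow_sum_Diff_eq:
  assumes "finite A"
  shows "(\<Sum>J\<in>Pow A. \<Sum>j\<in>A - J. h J j) = (\<Sum>S\<in>Pow A. \<Sum>j\<in>S. h (S - {j}) j)"
proof -
  have "(\<Sum>J\<in>Pow A. \<Sum>j\<in>A - J. h J j) = (\<Sum>(J, j)\<in>Sigma (Pow A) (\<lambda>J. A - J). h J j)"
    using assms by (subst sum.Sigma) auto
  also have "\<dots> = (\<Sum>(S, j)\<in>Sigma (Pow A) (\<lambda>S. S). h (S - {j}) j)"
    by (rule sum.reindex_bij_witness[where j="\<lambda>(J, j). (insert j J, j)" and i="\<lambda>(S, j). (S - {j}, j)"])
       (auto simp: insert_absorb)
  also have "\<dots> = (\<Sum>S\<in>Pow A. \<Sum>j\<in>S. h (S - {j}) j)"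
    using assms by (subst sum.Sigma) (auto intro: finite_subset)
  finally show ?thesis .
qed

lemma prod_cross_ratio_partial_fractions:
  fixes t z :: "'a::field"
  assumes "finite J" "inj_on x J" "z \<notin> x ` J"
  shows "(\<Prod>i\<in>J. (x i - t * z) / (x i - z)) - t ^ card J =
     (\<Sum>j\<in>J. (\<Prod>i\<in>J. t * x j - x i) / (\<Prod>i\<in>J - {j}. x j - x i) / (z - x j))"
proof -
  have "(\<Prod>i\<in>J. (x i - t * z) / (x i - z)) = (\<Prod>i\<in>J. ((\<lambda>_. t) i * z - x i) / (z - x i))"
    by (rule prod.cong[OF refl]) (simp add: diff_divide_diff_swap)
  also have "\<dots> = (\<Prod>i\<in>J. t) + (\<Sum>j\<in>J. (\<Prod>i\<in>J. t * x j - x i) / (\<Prod>i\<in>J - {j}. x j - x i) / (z - x j))"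
    by (rule prod_partial_fractions[OF assms])
  finally show ?thesis by simp
qed

lemma omega_coeff_pole_shift:
  fixes t z :: "'a::field"
  assumes A: "finite A" and S: "S \<subseteq> A" and j: "j \<in> S"
  shows "omega_coeff t x A S * (\<Prod>i\<in>S. G (x i)) *
           ((\<Prod>i\<in>S. t * x j - x i) / (\<Prod>i\<in>S - {j}. x j - x i) / (z - x j))
       = omega_coeff t x A (S - {j}) * (\<Prod>i\<in>S - {j}. G (x i)) * t ^ card (S - {j})
           * (G (x j) * (x j - t * x j) * (\<Prod>i\<in>A - (S - {j}) - {j}. (x j - t * x i) / (x j - x i)) / (z - x j))"
proof -
  define J where "J = S - {j}"
  have SJ: "S = insert j J" and jJ: "j \<notin> J" using j by (auto simp: J_def)
  have fJ: "finite J" using A S J_def finite_subset by auto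
  have fAS: "finite (A - S)" using A by auto
  have AJ: "A - J = insert j (A - S)" using S j by (auto simp: J_def)
  have AJj: "A - J - {j} = A - S" using S j by (auto simp: J_def)
  have jAS: "j \<notin> A - S" using j by auto
  define V where "V = (\<Prod>k\<in>A - S. (x j - t * x k) / (x j - x k))"
  define W where "W = (\<Prod>i\<in>J. \<Prod>k\<in>A - S. (x i - t * x k) / (x i - x k))"
  define U1 where "U1 = (\<Prod>i\<in>J. t * x j - x i)"
  define U2 where "U2 = (\<Prod>i\<in>J. x j - x i)"
  define Ph where "Ph = (\<Prod>i\<in>J. G (x i))"
  have cross_S: "cross_factor t x A S = V * W" unfolding cross_factor_def V_def W_def
    using fJ jJ by (simp add: SJ)
  have cross_J: "cross_factor t x A J = U1 / U2 * W"
  proof -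
    have "cross_factor t x A J = (\<Prod>i\<in>J. (x i - t * x j) / (x i - x j)) * W"
      unfolding cross_factor_def AJ W_def by (rule prod_prod_insert_inner[OF fAS jAS])
    also have "(\<Prod>i\<in>J. (x i - t * x j) / (x i - x j)) = U1 / U2"
      unfolding U1_def U2_def prod_dividef[symmetric]
      by (rule prod.cong[OF refl]) (simp add: diff_divide_diff_swap)
    finally show ?thesis .
  qed
  have QS: "(\<Prod>i\<in>S. t * x j - x i) = (t * x j - x j) * U1" unfolding SJ U1_def using fJ jJ by simp
  have PhS: "(\<Prod>i\<in>S. G (x i)) = G (x j) * Ph" unfolding SJ Ph_def using fJ jJ by simp
  have cS: "card S = Suc (card J)" unfolding SJ using fJ jJ by simp
  show ?thesis
    unfolding omega_coeff_def J_def[symmetric] AJj cross_S cross_J QS PhS cS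
      V_def[symmetric] Ph_def[symmetric] U2_def[symmetric]
    by (simp add: Suc_choose_two power_add divide_inverse algebra_simps)
qed

lemma sum_omega_coeff_cross_ratio:
  fixes t z :: "'a::field"
  assumes A: "finite A" and inj: "inj_on x A" and z: "z \<notin> x ` A"
  shows "(\<Sum>J\<in>Pow A. omega_coeff t x A J * (\<Prod>i\<in>J. G (x i)) *
            ((\<Prod>i\<in>J. (x i - t * z) / (x i - z)) - t ^ card J))
       = (\<Sum>J\<in>Pow A. omega_coeff t x A J * (\<Prod>i\<in>J. G (x i)) * t ^ card J
           * (\<Sum>j\<in>A - J. G (x j) * (x j - t * x j) * (\<Prod>i\<in>A - J - {j}. (x j - t * x i) / (x j - x i)) / (z - x j)))"
proof -
  define h where "h J j = omega_coeff t x A J * (\<Prod>i\<in>J. G (x i)) * t ^ card J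
           * (G (x j) * (x j - t * x j) * (\<Prod>i\<in>A - J - {j}. (x j - t * x i) / (x j - x i)) / (z - x j))" for J j
  have "(\<Sum>J\<in>Pow A. omega_coeff t x A J * (\<Prod>i\<in>J. G (x i)) *
            ((\<Prod>i\<in>J. (x i - t * z) / (x i - z)) - t ^ card J))
     = (\<Sum>S\<in>Pow A. \<Sum>j\<in>S. h (S - {j}) j)"
  proof (rule sum.cong[OF refl])
    fix S assume S: "S \<in> Pow A"
    have fS: "finite S" using S A finite_subset by auto
    have iS: "inj_on x S" using S inj inj_on_subset by auto
    have zS: "z \<notin> x ` S" using S z by auto
    show "omega_coeff t x A S * (\<Prod>i\<in>S. G (x i)) *
            ((\<Prod>i\<in>S. (x i - t * z) / (x i - z)) - t ^ card S) = (\<Sum>j\<in>S. h (S - {j}) j)"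
      unfolding prod_cross_ratio_partial_fractions[OF fS iS zS] sum_distrib_left h_def
      using S by (intro sum.cong refl omega_coeff_pole_shift[OF A]) auto
  qed
  also have "\<dots> = (\<Sum>J\<in>Pow A. \<Sum>j\<in>A - J. h J j)" by (rule sum_Pow_sum_Diff_eq[OF A, symmetric])
  finally show ?thesis unfolding h_def sum_distrib_left .
qed

lemma omega_weight_partial_fractions:
  fixes t z :: "'a::field"
  assumes B: "finite B" and K: "finite K" and t: "t \<noteq> 0" and iy: "inj_on y B" and ix: "inj_on x K"
    and sep: "\<forall>i\<in>K. \<forall>k\<in>B. x i \<noteq> t * y k" and zx: "z \<notin> x ` K" and zy: "\<forall>k\<in>B. z \<noteq> t * y k"
  shows "omega_weight t y B z * (\<Prod>i\<in>K. (z - t * x i) / (z - x i)) = 1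
     + (\<Sum>k\<in>B. ((\<Prod>n\<in>B. t * y k - y n) / (\<Prod>n\<in>B - {k}. t * y k - t * y n))
          * ((\<Prod>i\<in>K. t * y k - t * x i) / (\<Prod>i\<in>K. t * y k - x i)) / (z - t * y k))
     + (\<Sum>j\<in>K. omega_weight t y B (x j) * (x j - t * x j)
          * (\<Prod>i\<in>K - {j}. (x j - t * x i) / (x j - x i)) / (z - x j))"
proof -
  \<comment> \<open>a single expansion, with the poles t y k and x i indexed by the disjoint union of B and K\<close>
  define N where "N = B <+> K"
  define num where "num = case_sum y (\<lambda>i. t * x i)"
  define pole where "pole = case_sum (\<lambda>k. t * y k) x"
  have fN: "finite N" using B K by (simp add: N_def)
  have inj: "inj_on pole N" unfolding pole_def N_def
  proof (rule inj_on_case_sum)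
    show "inj_on (\<lambda>k. t * y k) B" using iy t by (auto simp: inj_on_def)
    show "\<forall>k\<in>B. \<forall>i\<in>K. t * y k \<noteq> x i" using sep by force
  qed (rule ix)
  have zN: "z \<notin> pole ` N" unfolding N_def pole_def using zx zy by auto
  have expansion: "(\<Prod>n\<in>N. ((\<lambda>_. 1) n * z - num n) / (z - pole n)) = (\<Prod>n\<in>N. (\<lambda>_. 1::'a) n) +
     (\<Sum>k\<in>N. (\<Prod>j\<in>N. (\<lambda>_. 1) j * pole k - num j) / (\<Prod>j\<in>N - {k}. pole k - pole j) / (z - pole k))"
    by (rule prod_partial_fractions[OF fN inj zN])
  have lhs: "(\<Prod>n\<in>N. ((\<lambda>_. 1) n * z - num n) / (z - pole n)) =
      omega_weight t y B z * (\<Prod>i\<in>K. (z - t * x i) / (z - x i))"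
    unfolding N_def prod.Plus[OF B K] omega_weight_def by (simp add: num_def pole_def comp_def)
  have NL: "\<And>k. N - {Inl k} = (B - {k}) <+> K" and NR: "\<And>j. N - {Inr j} = B <+> (K - {j})"
    unfolding N_def by auto
  have rhs: "(\<Sum>k\<in>N. (\<Prod>j\<in>N. (\<lambda>_. 1) j * pole k - num j) / (\<Prod>j\<in>N - {k}. pole k - pole j) / (z - pole k)) =
     (\<Sum>k\<in>B. ((\<Prod>n\<in>B. t * y k - y n) / (\<Prod>n\<in>B - {k}. t * y k - t * y n))
        * ((\<Prod>i\<in>K. t * y k - t * x i) / (\<Prod>i\<in>K. t * y k - x i)) / (z - t * y k))
     + (\<Sum>j\<in>K. omega_weight t y B (x j) * (x j - t * x j)
          * (\<Prod>i\<in>K - {j}. (x j - t * x i) / (x j - x i)) / (z - x j))"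
  proof -
    have fB: "finite (B - {k})" for k using B by auto
    have fK: "finite (K - {j})" for j using K by auto
    show ?thesis
      unfolding N_def sum.Plus[OF B K] NL[unfolded N_def] NR[unfolded N_def] comp_def
        prod.Plus[OF B K] prod.Plus[OF fB K] prod.Plus[OF B fK]
    proof (intro arg_cong2[where f="(+)"] sum.cong refl)
      fix k assume "k \<in> B"
      show "((\<Prod>n\<in>B. 1 * pole (Inl k) - num (Inl n)) * (\<Prod>n\<in>K. 1 * pole (Inl k) - num (Inr n))) /
          ((\<Prod>n\<in>B - {k}. pole (Inl k) - pole (Inl n)) * (\<Prod>n\<in>K. pole (Inl k) - pole (Inr n))) / (z - pole (Inl k)) =
         (\<Prod>n\<in>B. t * y k - y n) / (\<Prod>n\<in>B - {k}. t * y k - t * y n) *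
          ((\<Prod>i\<in>K. t * y k - t * x i) / (\<Prod>i\<in>K. t * y k - x i)) / (z - t * y k)"
        by (simp add: num_def pole_def)
    next
      fix j assume "j \<in> K"
      then have "(\<Prod>i\<in>K. x j - t * x i) = (x j - t * x j) * (\<Prod>i\<in>K - {j}. x j - t * x i)"
        using K by (simp add: prod.remove)
      then show "((\<Prod>n\<in>B. 1 * pole (Inr j) - num (Inl n)) * (\<Prod>n\<in>K. 1 * pole (Inr j) - num (Inr n))) /
          ((\<Prod>n\<in>B. pole (Inr j) - pole (Inl n)) * (\<Prod>n\<in>K - {j}. pole (Inr j) - pole (Inr n))) / (z - pole (Inr j)) =
         omega_weight t y B (x j) * (x j - t * x j) * (\<Prod>i\<in>K - {j}. (x j - t * x i) / (x j - x i)) / (z - x j)"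
        by (simp add: num_def pole_def omega_weight_def prod_dividef)
    qed
  qed
  show ?thesis using expansion unfolding lhs rhs by (simp add: N_def)
qed

lemma omega_weight_residue_factor:
  fixes t :: "'a::field"
  assumes A: "finite A" and J: "J \<subseteq> A" and B: "finite B" and k: "k \<in> B"
  shows "t ^ card J * (\<Prod>i\<in>J. omega_weight t y B (x i)) *
           (r * ((\<Prod>i\<in>A - J. t * y k - t * x i) / (\<Prod>i\<in>A - J. t * y k - x i)))
       = t ^ card A * r * (\<Prod>j\<in>A. (x j - y k) / (x j - t * y k)) * (\<Prod>i\<in>J. omega_weight t y (B - {k}) (x i))"
proof -
  define f where "f u = (u - y k) / (u - t * y k)" for u
  have weight: "(\<Prod>i\<in>J. omega_weight t y B (x i)) = (\<Prod>i\<in>J. f (x i)) * (\<Prod>i\<in>J. omega_weight t y (B - {k}) (x i))"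
    unfolding f_def omega_weight_def prod.distrib[symmetric]
    by (rule prod.cong[OF refl]) (rule prod.remove[OF B k])
  have split: "(\<Prod>j\<in>A. (x j - y k) / (x j - t * y k)) = (\<Prod>j\<in>J. f (x j)) * (\<Prod>j\<in>A - J. f (x j))"
    unfolding f_def prod.subset_diff[OF J A] by (rule mult.commute)
  have card: "card A = card J + card (A - J)"
    using J A by (metis card_Diff_subset card_mono le_add_diff_inverse finite_subset)
  have scale: "(\<Prod>i\<in>A - J. t * y k - t * x i) = t ^ card (A - J) * (\<Prod>i\<in>A - J. y k - x i)"
  proof -
    have "(\<Prod>i\<in>A - J. t * y k - t * x i) = (\<Prod>i\<in>A - J. t * (y k - x i))"
      by (rule prod.cong[OF refl]) (simp add: algebra_simps)
    then show ?thesis by (simp add: prod.distrib)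
  qed
  have ratio: "(\<Prod>i\<in>A - J. y k - x i) / (\<Prod>i\<in>A - J. t * y k - x i) = (\<Prod>i\<in>A - J. f (x i))"
    unfolding f_def prod_dividef[symmetric] by (rule prod.cong[OF refl]) (simp add: diff_divide_diff_swap)
  have residue: "r * ((\<Prod>i\<in>A - J. t * y k - t * x i) / (\<Prod>i\<in>A - J. t * y k - x i))
      = r * (t ^ card (A - J) * (\<Prod>i\<in>A - J. f (x i)))"
    unfolding scale ratio[symmetric] by (simp add: times_divide_eq_left)
  show ?thesis
    unfolding weight split card residue power_add by (simp add: algebra_simps)
qed

lemma omega_on_weight_insert_principal_parts:
  fixes t :: "'a::field"
  assumes A: "finite A" and a: "a \<notin> A" and B: "finite B" and t: "t \<noteq> 0"
    and ix: "inj_on x (insert a A)" and iy: "inj_on y B"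
    and sep: "\<forall>i\<in>insert a A. \<forall>k\<in>B. x i \<noteq> t * y k"
  shows "omega_on t x (insert a A) (omega_weight t y B) =
    (\<Sum>J\<in>Pow A. omega_coeff t x A J * (- (t ^ card J * (\<Prod>i\<in>J. omega_weight t y B (x i)) *
      (\<Sum>k\<in>B. (\<Prod>n\<in>B. t * y k - y n) / (\<Prod>n\<in>B - {k}. t * y k - t * y n)
        * ((\<Prod>i\<in>A - J. t * y k - t * x i) / (\<Prod>i\<in>A - J. t * y k - x i)) / (x a - t * y k)))))"
proof -
  define z where "z = x a"
  define F where "F = omega_weight t y B"
  define c where "c J = omega_coeff t x A J * (\<Prod>i\<in>J. F (x i))" for J
  define res where "res J k = (\<Prod>n\<in>B. t * y k - y n) / (\<Prod>n\<in>B - {k}. t * y k - t * y n)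
      * ((\<Prod>i\<in>A - J. t * y k - t * x i) / (\<Prod>i\<in>A - J. t * y k - x i))" for J k
  define pole_x where "pole_x J = (\<Sum>j\<in>A - J. F (x j) * (x j - t * x j)
      * (\<Prod>i\<in>A - J - {j}. (x j - t * x i) / (x j - x i)) / (z - x j))" for J
  have ixA: "inj_on x A" and zA: "z \<notin> x ` A" using ix a by (auto simp: z_def inj_on_def)
  have cross: "(\<Sum>J\<in>Pow A. c J * ((\<Prod>i\<in>J. (x i - t * z) / (x i - z)) - t ^ card J)) =
      (\<Sum>J\<in>Pow A. c J * t ^ card J * pole_x J)"
    unfolding c_def pole_x_def by (rule sum_omega_coeff_cross_ratio[OF A ixA zA])
  have weight: "F z * (\<Prod>j\<in>A - J. (z - t * x j) / (z - x j)) - 1 = (\<Sum>k\<in>B. res J k / (z - t * y k)) + pole_x J"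
    for J
  proof -
    have ixK: "inj_on x (A - J)" using ixA by (rule inj_on_subset) auto
    have sepK: "\<forall>i\<in>A - J. \<forall>k\<in>B. x i \<noteq> t * y k" and zy: "\<forall>k\<in>B. z \<noteq> t * y k"
      using sep by (auto simp: z_def)
    have zK: "z \<notin> x ` (A - J)" using zA by auto
    show ?thesis
      unfolding F_def pole_x_def omega_weight_partial_fractions[OF B _ t iy ixK sepK zK zy, OF finite_Diff[OF A]]
      by (simp add: res_def)
  qed
  have "omega_on t x (insert a A) F = (\<Sum>J\<in>Pow A. c J * ((\<Prod>i\<in>J. (x i - t * z) / (x i - z)) - t ^ card J))
      - (\<Sum>J\<in>Pow A. c J * t ^ card J * (F z * (\<Prod>j\<in>A - J. (z - t * x j) / (z - x j)) - 1))"
    unfolding omega_on_insert[OF A a] sum_subtractf[symmetric] c_def z_def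
    by (rule sum.cong[OF refl]) (simp add: algebra_simps)
  \<comment> \<open>the principal parts pole_x J at the poles x j cancel\<close>
  also have "\<dots> = (\<Sum>J\<in>Pow A. c J * t ^ card J * pole_x J)
      - (\<Sum>J\<in>Pow A. c J * t ^ card J * ((\<Sum>k\<in>B. res J k / (z - t * y k)) + pole_x J))"
    unfolding cross weight ..
  also have "\<dots> = (\<Sum>J\<in>Pow A. omega_coeff t x A J *
      (- (t ^ card J * (\<Prod>i\<in>J. F (x i)) * (\<Sum>k\<in>B. res J k / (z - t * y k)))))"
    unfolding sum_subtractf[symmetric] c_def by (rule sum.cong[OF refl]) (simp add: algebra_simps)
  finally show ?thesis by (simp only: F_def res_def z_def)
qed

lemma omega_on_weight_insert:
  fixes t :: "'a::field"
  assumes A: "finite A" and a: "a \<notin> A" and B: "finite B" and t: "t \<noteq> 0"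
    and ix: "inj_on x (insert a A)" and iy: "inj_on y B"
    and sep: "\<forall>i\<in>insert a A. \<forall>k\<in>B. x i \<noteq> t * y k"
  shows "omega_on t x (insert a A) (omega_weight t y B) =
    (\<Sum>k\<in>B. - (t ^ card A * ((\<Prod>n\<in>B. t * y k - y n) / (\<Prod>n\<in>B - {k}. t * y k - t * y n))
      * (\<Prod>j\<in>A. (x j - y k) / (x j - t * y k)) / (x a - t * y k)) * omega_on t x A (omega_weight t y (B - {k})))"
proof -
  define F where "F = omega_weight t y B"
  define r where "r k = (\<Prod>n\<in>B. t * y k - y n) / (\<Prod>n\<in>B - {k}. t * y k - t * y n)" for k
  define res where "res J k = r k * ((\<Prod>i\<in>A - J. t * y k - t * x i) / (\<Prod>i\<in>A - J. t * y k - x i))" for J k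
  define coef where "coef k = - (t ^ card A * r k * (\<Prod>j\<in>A. (x j - y k) / (x j - t * y k)) / (x a - t * y k))" for k
  have residue: "- (t ^ card J * (\<Prod>i\<in>J. F (x i)) * (res J k / (x a - t * y k))) =
      coef k * (\<Prod>i\<in>J. omega_weight t y (B - {k}) (x i))" if "J \<in> Pow A" "k \<in> B" for J k
  proof -
    have factor: "t ^ card J * (\<Prod>i\<in>J. F (x i)) * res J k = t ^ card A * r k * (\<Prod>j\<in>A. (x j - y k) / (x j - t * y k))
        * (\<Prod>i\<in>J. omega_weight t y (B - {k}) (x i))"
      unfolding F_def res_def using that by (intro omega_weight_residue_factor[OF A _ B]) auto
    have "- (t ^ card J * (\<Prod>i\<in>J. F (x i)) * (res J k / (x a - t * y k))) =
        - (t ^ card J * (\<Prod>i\<in>J. F (x i)) * res J k) / (x a - t * y k)"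
      by simp
    also have "\<dots> = coef k * (\<Prod>i\<in>J. omega_weight t y (B - {k}) (x i))"
      unfolding factor by (simp add: coef_def)
    finally show ?thesis .
  qed
  have "omega_on t x (insert a A) F = (\<Sum>J\<in>Pow A. omega_coeff t x A J *
      (- (t ^ card J * (\<Prod>i\<in>J. F (x i)) * (\<Sum>k\<in>B. res J k / (x a - t * y k)))))"
    unfolding F_def res_def r_def by (rule omega_on_weight_insert_principal_parts[OF assms])
  also have "\<dots> = (\<Sum>J\<in>Pow A. omega_coeff t x A J * (\<Sum>k\<in>B. coef k * (\<Prod>i\<in>J. omega_weight t y (B - {k}) (x i))))"
    by (rule sum.cong[OF refl]) (simp add: sum_distrib_left residue[symmetric] sum_negf)
  also have "\<dots> = (\<Sum>k\<in>B. coef k * omega_on t x A (omega_weight t y (B - {k})))"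
    unfolding omega_on_def sum_distrib_left
    by (subst sum.swap) (intro sum.cong refl, simp add: algebra_simps)
  finally show ?thesis by (simp only: F_def coef_def r_def)
qed

section \<open>Summing over injections\<close>

lemma prod_upper_triangle_Suc:
  "(\<Prod>i\<in>{1..Suc m}. \<Prod>j\<in>{i<..Suc m}. P i j) = (\<Prod>i\<in>{1..m}. \<Prod>j\<in>{i<..m}. P i j) * (\<Prod>i\<in>{1..m}. P i (Suc m))"
proof -
  have "{1..Suc m} = insert (Suc m) {1..m}" by auto
  then have "(\<Prod>i\<in>{1..Suc m}. \<Prod>j\<in>{i<..Suc m}. P i j) = (\<Prod>i\<in>{1..m}. \<Prod>j\<in>{i<..Suc m}. P i j)"
    by simp
  also have "\<dots> = (\<Prod>i\<in>{1..m}. (\<Prod>j\<in>{i<..m}. P i j) * P i (Suc m))"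
  proof (rule prod.cong[OF refl])
    fix i assume "i \<in> {1..m}"
    then have "{i<..Suc m} = insert (Suc m) {i<..m}" by auto
    then show "(\<Prod>j\<in>{i<..Suc m}. P i j) = (\<Prod>j\<in>{i<..m}. P i j) * P i (Suc m)"
      by (simp add: mult.commute)
  qed
  finally show ?thesis by (simp add: prod.distrib)
qed

lemma prod_Diff_image:
  assumes "finite C" "l ` I \<subseteq> C" "inj_on l I"
  shows "prod f C = prod f (C - l ` I) * (\<Prod>i\<in>I. f (l i))"
proof -
  have "prod f C = prod f (C - l ` I) * prod f (l ` I)" by (rule prod.subset_diff[OF assms(2,1)])
  also have "prod f (l ` I) = (\<Prod>i\<in>I. f (l i))" using assms(3) by (simp add: prod.reindex)
  finally show ?thesis .
qed

lemma recursion_coefficient: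
  fixes t :: "'a::field"
  assumes t: "t \<noteq> 0" and B: "finite B" and k: "k \<in> B"
  shows "- (t ^ m * ((\<Prod>n\<in>B. t * y k - y n) / (\<Prod>n\<in>B - {k}. t * y k - t * y n))) * t powi (int m * (int m - int (card (B - {k}))))
     = t powi (int (Suc m) * (int (Suc m) - int (card B))) * ((1 - t) * y k * (\<Prod>j\<in>B - {k}. (y j - t * y k) / (y j - y k)))"
proof -
  define c where "c = card B"
  have c1: "c \<ge> 1" using B k by (simp add: c_def Suc_le_eq card_gt_0_iff) blast
  have cB: "card (B - {k}) = c - 1" using B k by (simp add: c_def)
  have p1: "(\<Prod>n\<in>B. t * y k - y n) = (t * y k - y k) * (\<Prod>n\<in>B - {k}. t * y k - y n)"
    using B k by (rule prod.remove)
  have p2: "(\<Prod>n\<in>B - {k}. t * y k - t * y n) = t ^ (c - 1) * (\<Prod>n\<in>B - {k}. y k - y n)"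
  proof -
    have "(\<Prod>n\<in>B - {k}. t * y k - t * y n) = (\<Prod>n\<in>B - {k}. t * (y k - y n))"
      by (rule prod.cong[OF refl]) (simp add: algebra_simps)
    also have "\<dots> = t ^ (c - 1) * (\<Prod>n\<in>B - {k}. y k - y n)" by (simp add: prod.distrib cB)
    finally show ?thesis .
  qed
  have p3: "(\<Prod>n\<in>B - {k}. t * y k - y n) / (\<Prod>n\<in>B - {k}. y k - y n) = (\<Prod>j\<in>B - {k}. (y j - t * y k) / (y j - y k))"
    unfolding prod_dividef[symmetric] by (rule prod.cong[OF refl]) (simp add: diff_divide_diff_swap)
  have ex: "int m * (int m - int (c - 1)) = int (Suc m) * (int (Suc m) - int c) + int (c - 1) - int m"
    using c1 by (simp add: of_nat_diff algebra_simps)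
  have pw: "t powi (int m * (int m - int (c - 1))) = t powi (int (Suc m) * (int (Suc m) - int c)) * t ^ (c - 1) / t ^ m"
    unfolding ex using t by (simp add: power_int_diff power_int_add)
  have "- (t ^ m * ((\<Prod>n\<in>B. t * y k - y n) / (\<Prod>n\<in>B - {k}. t * y k - t * y n))) * t powi (int m * (int m - int (card (B - {k}))))
     = - (t ^ m * ((t * y k - y k) * ((\<Prod>n\<in>B - {k}. t * y k - y n) / (\<Prod>n\<in>B - {k}. y k - y n)) / t ^ (c - 1)))
       * (t powi (int (Suc m) * (int (Suc m) - int c)) * t ^ (c - 1) / t ^ m)"
    unfolding p1 p2 cB pw by (simp add: field_simps)
  also have "\<dots> = t powi (int (Suc m) * (int (Suc m) - int c)) * ((1 - t) * y k * (\<Prod>j\<in>B - {k}. (y j - t * y k) / (y j - y k)))"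
    unfolding p3 using t by (simp add: field_simps)
  finally show ?thesis by (simp add: c_def)
qed

definition injections :: "nat \<Rightarrow> nat set \<Rightarrow> (nat \<Rightarrow> nat) set" where
  "injections m B = {l \<in> {1..m} \<rightarrow>\<^sub>E B. inj_on l {1..m}}"

lemma finite_injections: "finite B \<Longrightarrow> finite (injections m B)"
  unfolding injections_def by (rule finite_subset[OF _ finite_PiE[of "{1..m}" "\<lambda>_. B"]]) auto

lemma fun_upd_in_injections:
  assumes k: "k \<in> B" and l: "l \<in> injections m (B - {k})"
  shows "l(Suc m := k) \<in> injections (Suc m) B"
proof -
  from l have lP: "l \<in> {1..m} \<rightarrow>\<^sub>E B - {k}" and li: "inj_on l {1..m}" by (auto simp: injections_def)
  have e: "{1..Suc m} = insert (Suc m) {1..m}" by auto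
  have P: "l(Suc m := k) \<in> {1..Suc m} \<rightarrow>\<^sub>E B"
    using lP k unfolding PiE_iff extensional_def by auto
  have "inj_on (l(Suc m := k)) {1..m}" using li by (rule inj_on_cong[THEN iffD1, rotated]) auto
  moreover have "k \<notin> l ` {1..m}" using lP by auto
  ultimately have "inj_on (l(Suc m := k)) {1..Suc m}" unfolding e by (simp add: inj_on_insert)
  with P show ?thesis by (simp add: injections_def)
qed

lemma injections_Suc_restrict:
  assumes b: "b \<in> injections (Suc m) B"
  shows "b (Suc m) \<in> B" "b(Suc m := undefined) \<in> injections m (B - {b (Suc m)})"
proof -
  from b have bP: "b \<in> {1..Suc m} \<rightarrow>\<^sub>E B" and bi: "inj_on b {1..Suc m}" by (auto simp: injections_def)
  show "b (Suc m) \<in> B" using bP by auto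
  have ne: "b i \<noteq> b (Suc m)" if "i \<in> {1..m}" for i
    using inj_onD[OF bi, of i "Suc m"] that by auto
  have P: "b(Suc m := undefined) \<in> {1..m} \<rightarrow>\<^sub>E B - {b (Suc m)}"
    using bP ne unfolding PiE_iff extensional_def by auto
  have "inj_on b {1..m}" using bi by (rule inj_on_subset) auto
  then have "inj_on (b(Suc m := undefined)) {1..m}" by (rule inj_on_cong[THEN iffD1, rotated]) auto
  with P show "b(Suc m := undefined) \<in> injections m (B - {b (Suc m)})" by (simp add: injections_def)
qed

lemma sum_injections_Suc:
  assumes B: "finite B"
  shows "(\<Sum>l\<in>injections (Suc m) B. G l) = (\<Sum>k\<in>B. \<Sum>l\<in>injections m (B - {k}). G (l(Suc m := k)))"
proof -
  have "(\<Sum>k\<in>B. \<Sum>l\<in>injections m (B - {k}). G (l(Suc m := k))) = (\<Sum>(k,l)\<in>Sigma B (\<lambda>k. injections m (B - {k})). G (l(Suc m := k)))"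
    using B by (subst sum.Sigma) (auto intro: finite_injections)
  also have "\<dots> = (\<Sum>l\<in>injections (Suc m) B. G l)"
  proof (rule sum.reindex_bij_witness[where j="\<lambda>(k,l). l(Suc m := k)" and i="\<lambda>l. (l (Suc m), l(Suc m := undefined))"])
    fix a assume "a \<in> Sigma B (\<lambda>k. injections m (B - {k}))"
    then obtain k l where a: "a = (k, l)" "k \<in> B" "l \<in> injections m (B - {k})" by auto
    then have "l (Suc m) = undefined" by (auto simp: injections_def PiE_def extensional_def)
    then show "(\<lambda>l. (l (Suc m), l(Suc m := undefined))) ((\<lambda>(k, l). l(Suc m := k)) a) = a"
      using a by auto
    show "(\<lambda>(k, l). l(Suc m := k)) a \<in> injections (Suc m) B"
      using a fun_upd_in_injections by auto
  next
    fix b assume b: "b \<in> injections (Suc m) B"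
    show "(\<lambda>(k, l). l(Suc m := k)) ((\<lambda>l. (l (Suc m), l(Suc m := undefined))) b) = b" by auto
    show "(\<lambda>l. (l (Suc m), l(Suc m := undefined))) b \<in> Sigma B (\<lambda>k. injections m (B - {k}))"
      using injections_Suc_restrict[OF b] by auto
  next
    fix a assume "a \<in> Sigma B (\<lambda>k. injections m (B - {k}))"
    show "G ((\<lambda>(k, l). l(Suc m := k)) a) = (case a of (k, l) \<Rightarrow> G (l(Suc m := k)))"
      by (auto split: prod.splits)
  qed
  finally show ?thesis ..
qed

definition injection_term :: "'a::field \<Rightarrow> (nat \<Rightarrow> 'a) \<Rightarrow> (nat \<Rightarrow> 'a) \<Rightarrow> nat \<Rightarrow> nat set \<Rightarrow> (nat \<Rightarrow> nat) \<Rightarrow> 'a" where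
  "injection_term t x y m B l = (\<Prod>i\<in>{1..m}. y (l i) / (x i - t * y (l i)))
     * (\<Prod>i\<in>B - l ` {1..m}. \<Prod>j\<in>{1..m}. (y i - t * y (l j)) / (y i - y (l j)))
     * (\<Prod>i\<in>{1..m}. \<Prod>j\<in>{i<..m}.
          (x i - y (l j)) / (x i - t * y (l j)) * ((y (l i) - t * y (l j)) / (y (l i) - y (l j))))"

lemma injection_term_fun_upd:
  assumes B: "finite B" and k: "k \<in> B" and l: "l \<in> injections m (B - {k})"
  shows "injection_term t x y (Suc m) B (l(Suc m := k)) = injection_term t x y m (B - {k}) l * (y k / (x (Suc m) - t * y k))
     * (\<Prod>j\<in>B - {k}. (y j - t * y k) / (y j - y k)) * (\<Prod>i\<in>{1..m}. (x i - y k) / (x i - t * y k))"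
proof -
  define L where "L = l(Suc m := k)"
  define g where "g i p = (y i - t * y p) / (y i - y p)" for i p
  define h where "h i p = (x i - y p) / (x i - t * y p)" for i p
  from l have lP: "l \<in> {1..m} \<rightarrow>\<^sub>E B - {k}" and li: "inj_on l {1..m}" by (auto simp: injections_def)
  have e: "{1..Suc m} = insert (Suc m) {1..m}" by auto
  have nm: "Suc m \<notin> {1..m}" by auto
  have Lo: "\<And>i. i \<in> {1..m} \<Longrightarrow> L i = l i" by (auto simp: L_def)
  have Lm: "L (Suc m) = k" by (simp add: L_def)
  have first: "(\<Prod>i\<in>{1..Suc m}. y (L i) / (x i - t * y (L i))) = y k / (x (Suc m) - t * y k) * (\<Prod>i\<in>{1..m}. y (l i) / (x i - t * y (l i)))"
    unfolding e by (simp add: Lm Lo nm)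
  have img: "B - L ` {1..Suc m} = (B - {k}) - l ` {1..m}"
    unfolding e using Lo Lm by auto
  have second: "(\<Prod>i\<in>B - L ` {1..Suc m}. \<Prod>j\<in>{1..Suc m}. g i (L j)) =
      (\<Prod>i\<in>(B - {k}) - l ` {1..m}. \<Prod>j\<in>{1..m}. g i (l j)) * (\<Prod>i\<in>(B - {k}) - l ` {1..m}. g i k)"
  proof -
    have "(\<Prod>i\<in>(B - {k}) - l ` {1..m}. \<Prod>j\<in>{1..Suc m}. g i (L j)) = (\<Prod>i\<in>(B - {k}) - l ` {1..m}. g i k * (\<Prod>j\<in>{1..m}. g i (l j)))"
      by (rule prod.cong[OF refl]) (simp add: e Lm Lo nm)
    then show ?thesis unfolding img by (simp only: prod.distrib mult.commute)
  qed
  have third: "(\<Prod>i\<in>{1..Suc m}. \<Prod>j\<in>{i<..Suc m}. h i (L j) * g (L i) (L j)) =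
     (\<Prod>i\<in>{1..m}. \<Prod>j\<in>{i<..m}. h i (l j) * g (l i) (l j)) * (\<Prod>i\<in>{1..m}. h i k) * (\<Prod>i\<in>{1..m}. g (l i) k)"
  proof -
    have "(\<Prod>i\<in>{1..m}. \<Prod>j\<in>{i<..m}. h i (L j) * g (L i) (L j)) = (\<Prod>i\<in>{1..m}. \<Prod>j\<in>{i<..m}. h i (l j) * g (l i) (l j))"
      by (intro prod.cong refl) (auto simp: L_def)
    moreover have "(\<Prod>i\<in>{1..m}. h i (L (Suc m)) * g (L i) (L (Suc m))) = (\<Prod>i\<in>{1..m}. h i k) * (\<Prod>i\<in>{1..m}. g (l i) k)"
      by (simp add: Lm Lo prod.distrib)
    ultimately show ?thesis unfolding prod_upper_triangle_Suc by (simp only: mult.assoc)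
  qed
  have split: "(\<Prod>j\<in>B - {k}. g j k) = (\<Prod>i\<in>(B - {k}) - l ` {1..m}. g i k) * (\<Prod>i\<in>{1..m}. g (l i) k)"
    using B lP li by (intro prod_Diff_image) auto
  show ?thesis
    unfolding injection_term_def L_def[symmetric] g_def[symmetric] h_def[symmetric] first second third split
    by (simp add: mult_ac)
qed

lemma omega_on_weight_eq_sum_injections:
  fixes t :: "'a::field" and x y :: "nat \<Rightarrow> 'a"
  assumes t: "t \<noteq> 0"
  shows "finite B \<Longrightarrow> inj_on x {1..m} \<Longrightarrow> inj_on y B \<Longrightarrow> \<forall>i\<in>{1..m}. \<forall>k\<in>B. x i \<noteq> t * y k \<Longrightarrow>
    omega_on t x {1..m} (omega_weight t y B) =
      t powi (int m * (int m - int (card B))) * (1 - t) ^ m * (\<Sum>l\<in>injections m B. injection_term t x y m B l)"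
proof (induction m arbitrary: B)
  case 0
  have "injections 0 B = {\<lambda>_. undefined}" by (simp add: injections_def)
  then show ?case
    by (simp add: omega_on_def omega_coeff_def cross_factor_def injection_term_def binomial_eq_0)
next
  case (Suc m)
  note B = Suc.prems(1)
  have e: "{1..Suc m} = insert (Suc m) {1..m}" by auto
  define r where "r k = (\<Prod>n\<in>B. t * y k - y n) / (\<Prod>n\<in>B - {k}. t * y k - t * y n)" for k
  define H where "H k = (\<Prod>j\<in>{1..m}. (x j - y k) / (x j - t * y k))" for k
  define G where "G k = (\<Prod>j\<in>B - {k}. (y j - t * y k) / (y j - y k))" for k
  define d where "d k = x (Suc m) - t * y k" for k
  define S where "S k = (\<Sum>l\<in>injections m (B - {k}). injection_term t x y m (B - {k}) l)" for k
  define p where "p = t powi (int (Suc m) * (int (Suc m) - int (card B))) * (1 - t) ^ Suc m"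
  have ix: "inj_on x (insert (Suc m) {1..m})" and sep: "\<forall>i\<in>insert (Suc m) {1..m}. \<forall>k\<in>B. x i \<noteq> t * y k"
    using Suc.prems(2,4) unfolding e by auto
  have "omega_on t x {1..Suc m} (omega_weight t y B) =
      (\<Sum>k\<in>B. - (t ^ m * r k * H k / d k) * omega_on t x {1..m} (omega_weight t y (B - {k})))"
    unfolding e by (subst omega_on_weight_insert[OF _ _ B t ix Suc.prems(3) sep]) (simp_all add: r_def H_def d_def)
  also have "\<dots> = (\<Sum>k\<in>B. p * (S k * (y k / d k * G k * H k)))"
  proof (rule sum.cong[OF refl])
    fix k assume k: "k \<in> B"
    define q where "q = t powi (int m * (int m - int (card (B - {k}))))"
    have IH: "omega_on t x {1..m} (omega_weight t y (B - {k})) = q * (1 - t) ^ m * S k"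
      unfolding S_def q_def using Suc.prems by (intro Suc.IH) (auto simp: e inj_on_insert intro: inj_on_subset)
    have coefficient: "- (t ^ m * r k) * q = t powi (int (Suc m) * (int (Suc m) - int (card B))) * ((1 - t) * y k * G k)"
      unfolding r_def G_def q_def by (rule recursion_coefficient[OF t B k])
    have "- (t ^ m * r k * H k / d k) * omega_on t x {1..m} (omega_weight t y (B - {k})) =
        (- (t ^ m * r k) * q) * (H k / d k * (1 - t) ^ m * S k)"
      unfolding IH by (simp add: algebra_simps)
    also have "\<dots> = p * (S k * (y k / d k * G k * H k))"
      unfolding coefficient p_def by (simp add: algebra_simps)
    finally show "- (t ^ m * r k * H k / d k) * omega_on t x {1..m} (omega_weight t y (B - {k})) =
        p * (S k * (y k / d k * G k * H k))" .
  qed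
  also have "\<dots> = p * (\<Sum>l\<in>injections (Suc m) B. injection_term t x y (Suc m) B l)"
    unfolding sum_injections_Suc[OF B] sum_distrib_left S_def sum_distrib_right
    by (intro sum.cong refl) (simp add: injection_term_fun_upd[OF B] d_def G_def H_def mult_ac)
  finally show ?case by (simp only: p_def)
qed

theorem corollary3p5:
  fixes m n :: nat and x y :: "nat \<Rightarrow> 'a::field" and t :: 'a
  assumes "m \<le> n"
    and "t \<noteq> 0"
    and "inj_on x {1..m}"
    and "inj_on y {1..n}"
    and "\<forall>i\<in>{1..m}. \<forall>j\<in>{1..n}. x i \<noteq> t * y j"
  shows "omega m n x y t =
    t powi (int m * (int m - int n)) * (1 - t) ^ m *
    (\<Sum>l\<in>{l\<in>{1..m} \<rightarrow>\<^sub>E {1..n}. inj_on l {1..m}}.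
       (\<Prod>i\<in>{1..m}. y (l i) / (x i - t * y (l i)))
     * (\<Prod>i\<in>{1..n} - l ` {1..m}. \<Prod>j\<in>{1..m}. (y i - t * y (l j)) / (y i - y (l j)))
     * (\<Prod>i\<in>{1..m}. \<Prod>j\<in>{i<..m}.
          (x i - y (l j)) / (x i - t * y (l j)) * ((y (l i) - t * y (l j)) / (y (l i) - y (l j)))))"
proof -
  have "omega m n x y t = omega_on t x {1..m} (omega_weight t y {1..n})"
    by (rule omega_eq_omega_on)
  also have "\<dots> = t powi (int m * (int m - int n)) * (1 - t) ^ m *
      (\<Sum>l\<in>injections m {1..n}. injection_term t x y m {1..n} l)"
    using omega_on_weight_eq_sum_injections[OF assms(2)] assms(3-5) by simp
  finally show ?thesis by (simp only: injections_def injection_term_def)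
qed

end
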